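(* Let $H,K$ be groups, $G=H\times K$, and $\phi\in\operatorname{End}(G)$ with $\phi(h,k)=(\alpha(h)\beta(k),\delta(k))$, where $\alpha\in\operatorname{End}(H)$, $\beta\in\operatorname{Hom}(K,H)$ with $[\operatorname{im}\alpha,\operatorname{im}\beta]=1$, and $\delta\in\operatorname{End}(K)$. Let $\{k_j\}_{j\in\mathcal J}$ be a set of representatives of the $\delta$-conjugacy classes of $K$. For each $j$, the twisted stabiliser $\operatorname{Stab}_\delta(k_j)$ acts on the right on the set $\mathcal R[\alpha]$ of $\alpha$-conjugacy classes of $H$ by $([h]_\alpha,y)\mapsto[h\beta(y)]_\alpha$; let $r_j$ be the number of orbits of this action. Then $R(\phi)=\sum_{j\in\mathcal J}r_j$, where an infinite sum, or a sum having some term equal to $\infty$, is interpreted as $\infty$.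
   Context: For an endomorphism $\psi$ of a group $A$, $x,y\in A$ are $\psi$-conjugate if $x=gy\psi(g)^{-1}$ for some $g\in A$; $[x]_\psi$ is the class of $x$, $\mathcal R[\psi]$ the set of classes and $R(\psi)=|\mathcal R[\psi]|\in\mathbb{N}\cup\{\infty\}$. The $\psi$-stabiliser (twisted stabiliser) of $a\in A$ is the subgroup $\operatorname{Stab}_\psi(a)=\{b\in A\mid a=ba\psi(b)^{-1}\}$. *)

theory Defs
  imports "HOL-Algebra.Algebra" "HOL-Library.Extended_Nat"
begin

definition twisted_conj :: "('a, 'm) monoid_scheme \<Rightarrow> ('a \<Rightarrow> 'a) \<Rightarrow> 'a \<Rightarrow> 'a \<Rightarrow> bool" where
  "twisted_conj A psi x y \<longleftrightarrow>
     (\<exists>g \<in> carrier A. x = g \<otimes>\<^bsub>A\<^esub> y \<otimes>\<^bsub>A\<^esub> inv\<^bsub>A\<^esub> (psi g))"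

definition twisted_class :: "('a, 'm) monoid_scheme \<Rightarrow> ('a \<Rightarrow> 'a) \<Rightarrow> 'a \<Rightarrow> 'a set" where
  "twisted_class A psi x = {y \<in> carrier A. twisted_conj A psi x y}"

definition twisted_classes :: "('a, 'm) monoid_scheme \<Rightarrow> ('a \<Rightarrow> 'a) \<Rightarrow> 'a set set" where
  "twisted_classes A psi = twisted_class A psi ` carrier A"

definition ecard :: "'a set \<Rightarrow> enat" where
  "ecard S = (if finite S then enat (card S) else \<infinity>)"

definition reidemeister :: "('a, 'm) monoid_scheme \<Rightarrow> ('a \<Rightarrow> 'a) \<Rightarrow> enat" where
  "reidemeister A psi = ecard (twisted_classes A psi)"

definition twisted_stab :: "('a, 'm) monoid_scheme \<Rightarrow> ('a \<Rightarrow> 'a) \<Rightarrow> 'a \<Rightarrow> 'a set" where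
  "twisted_stab A psi a = {b \<in> carrier A. a = b \<otimes>\<^bsub>A\<^esub> a \<otimes>\<^bsub>A\<^esub> inv\<^bsub>A\<^esub> (psi b)}"

text \<open>Orbits of the right action of S \<subseteq> carrier K on R[alpha] given by
  ([h]_alpha, y) \<mapsto> [h beta(y)]_alpha; the orbit of [h]_alpha is
  {[h beta(y)]_alpha | y \<in> S}.\<close>
definition action_orbits ::
  "('a, 'm) monoid_scheme \<Rightarrow> ('a \<Rightarrow> 'a) \<Rightarrow> ('b \<Rightarrow> 'a) \<Rightarrow> 'b set \<Rightarrow> 'a set set set" where
  "action_orbits H alpha beta S =
     (\<lambda>h. (\<lambda>y. twisted_class H alpha (h \<otimes>\<^bsub>H\<^esub> beta y)) ` S) ` carrier H"

text \<open>Sum in N \<union> {\<infinity>}: an infinite sum is \<infinity> (a sum with an \<infinity> term is \<infinity> automatically).\<close>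
definition esum :: "'j set \<Rightarrow> ('j \<Rightarrow> enat) \<Rightarrow> enat" where
  "esum J f = (if finite J then sum f J else \<infinity>)"

end

theory Submission
  imports Defs
begin

text \<open>
  An element \<open>(h, k)\<close> of \<open>H \<times> K\<close> is \<open>\<phi>\<close>-conjugate, via \<open>(1, c)\<close>, to \<open>(h \<beta>(c), k\<^sub>j)\<close>
  whenever \<open>k = c k\<^sub>j \<delta>(c)\<^sup>-\<^sup>1\<close>, so every class has a representative over some \<open>k\<^sub>j\<close>.
  Since \<open>\<phi>\<close> projects onto \<open>\<delta>\<close>, the classes of \<open>(a, k\<^sub>i)\<close> and \<open>(b, k\<^sub>j)\<close> can only
  meet when \<open>i = j\<close>; and then a twisting element \<open>(g, y)\<close> has \<open>y \<in> Stab\<^sub>\<delta>(k\<^sub>j)\<close> and gives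
  \<open>a = g b \<beta>(y)\<^sup>-\<^sup>1 \<alpha>(g)\<^sup>-\<^sup>1\<close>, i.e. \<open>[a]\<^sub>\<alpha>\<close> and \<open>[b]\<^sub>\<alpha>\<close> lie in one orbit of the
  stabiliser. So the \<open>\<phi>\<close>-classes correspond bijectively to pairs \<open>(j, orbit)\<close>, and
  counting them is counting a disjoint union.
\<close>

lemma twisted_conj_refl:
  assumes "group_hom A A psi" "x \<in> carrier A"
  shows "twisted_conj A psi x x"
proof -
  interpret group_hom A A psi by fact
  show ?thesis
    unfolding twisted_conj_def using assms(2) by (intro bexI[of _ "\<one>\<^bsub>A\<^esub>"]) auto
qed

lemma twisted_conj_sym:
  assumes "group_hom A A psi" "x \<in> carrier A" "y \<in> carrier A" "twisted_conj A psi x y"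
  shows "twisted_conj A psi y x"
proof -
  interpret group_hom A A psi by fact
  obtain g where g: "g \<in> carrier A" "x = g \<otimes>\<^bsub>A\<^esub> y \<otimes>\<^bsub>A\<^esub> inv\<^bsub>A\<^esub> (psi g)"
    using assms(4) unfolding twisted_conj_def by blast
  have "y = inv\<^bsub>A\<^esub> g \<otimes>\<^bsub>A\<^esub> x \<otimes>\<^bsub>A\<^esub> inv\<^bsub>A\<^esub> (psi (inv\<^bsub>A\<^esub> g))"
    using g assms(3) by (simp add: G.m_assoc G.inv_solve_left)
  then show ?thesis unfolding twisted_conj_def using g(1) by blast
qed

lemma twisted_conj_trans:
  assumes "group_hom A A psi" "x \<in> carrier A" "y \<in> carrier A" "z \<in> carrier A"
    and "twisted_conj A psi x y" "twisted_conj A psi y z"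
  shows "twisted_conj A psi x z"
proof -
  interpret group_hom A A psi by fact
  obtain g where g: "g \<in> carrier A" "x = g \<otimes>\<^bsub>A\<^esub> y \<otimes>\<^bsub>A\<^esub> inv\<^bsub>A\<^esub> (psi g)"
    using assms(5) unfolding twisted_conj_def by blast
  obtain g' where g': "g' \<in> carrier A" "y = g' \<otimes>\<^bsub>A\<^esub> z \<otimes>\<^bsub>A\<^esub> inv\<^bsub>A\<^esub> (psi g')"
    using assms(6) unfolding twisted_conj_def by blast
  have "x = (g \<otimes>\<^bsub>A\<^esub> g') \<otimes>\<^bsub>A\<^esub> z \<otimes>\<^bsub>A\<^esub> inv\<^bsub>A\<^esub> (psi (g \<otimes>\<^bsub>A\<^esub> g'))"
    using g g' assms(4) by (simp add: G.m_assoc G.inv_mult_group)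
  then show ?thesis unfolding twisted_conj_def using g(1) g'(1) by blast
qed

lemma twisted_class_eq_iff:
  assumes "group_hom A A psi" "x \<in> carrier A" "y \<in> carrier A"
  shows "twisted_class A psi x = twisted_class A psi y \<longleftrightarrow> twisted_conj A psi x y"
  unfolding twisted_class_def
  using assms twisted_conj_refl[OF assms(1)] twisted_conj_sym[OF assms(1)]
    twisted_conj_trans[OF assms(1)]
  by blast

lemma twisted_stab_iff:
  assumes "group_hom A A psi" "a \<in> carrier A" "b \<in> carrier A"
  shows "b \<in> twisted_stab A psi a \<longleftrightarrow> b \<otimes>\<^bsub>A\<^esub> a = a \<otimes>\<^bsub>A\<^esub> psi b"
proof -
  interpret group_hom A A psi by fact
  show ?thesis
    unfolding twisted_stab_def using assms(2,3)
    by (auto simp: G.inv_solve_right' G.inv_solve_right eq_commute[of a])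
qed

lemma twisted_stab_subgroup:
  assumes "group_hom A A psi" "a \<in> carrier A"
  shows "subgroup (twisted_stab A psi a) A"
proof -
  interpret group_hom A A psi by fact
  note stab = twisted_stab_iff[OF assms]
  show ?thesis
  proof (rule G.subgroupI)
    show "twisted_stab A psi a \<subseteq> carrier A" unfolding twisted_stab_def by blast
    show "twisted_stab A psi a \<noteq> {}" using stab[of "\<one>\<^bsub>A\<^esub>"] assms(2) by auto
  next
    fix b assume "b \<in> twisted_stab A psi a"
    then have b: "b \<in> carrier A" "b \<otimes>\<^bsub>A\<^esub> a = a \<otimes>\<^bsub>A\<^esub> psi b"
      using stab unfolding twisted_stab_def by auto
    have "a \<otimes>\<^bsub>A\<^esub> psi (inv\<^bsub>A\<^esub> b)
        = inv\<^bsub>A\<^esub> b \<otimes>\<^bsub>A\<^esub> (b \<otimes>\<^bsub>A\<^esub> a) \<otimes>\<^bsub>A\<^esub> inv\<^bsub>A\<^esub> (psi b)"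
      using b(1) assms(2) by (simp add: G.m_assoc flip: G.m_assoc[of "inv\<^bsub>A\<^esub> b" b])
    also have "\<dots> = inv\<^bsub>A\<^esub> b \<otimes>\<^bsub>A\<^esub> a"
      using b assms(2) by (simp add: G.m_assoc)
    finally show "inv\<^bsub>A\<^esub> b \<in> twisted_stab A psi a" using stab b(1) by simp
  next
    fix b c assume "b \<in> twisted_stab A psi a" "c \<in> twisted_stab A psi a"
    then have b: "b \<in> carrier A" "b \<otimes>\<^bsub>A\<^esub> a = a \<otimes>\<^bsub>A\<^esub> psi b"
      and c: "c \<in> carrier A" "c \<otimes>\<^bsub>A\<^esub> a = a \<otimes>\<^bsub>A\<^esub> psi c"
      using stab unfolding twisted_stab_def by auto
    have "b \<otimes>\<^bsub>A\<^esub> c \<otimes>\<^bsub>A\<^esub> a = b \<otimes>\<^bsub>A\<^esub> a \<otimes>\<^bsub>A\<^esub> psi c"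
      using b(1) c assms(2) by (simp add: G.m_assoc)
    also have "\<dots> = a \<otimes>\<^bsub>A\<^esub> psi (b \<otimes>\<^bsub>A\<^esub> c)"
      using b c(1) assms(2) by (simp add: G.m_assoc)
    finally show "b \<otimes>\<^bsub>A\<^esub> c \<in> twisted_stab A psi a" using stab b(1) c(1) by simp
  qed
qed

lemma ecard_image_eq_if_same_fibres:
  assumes "\<forall>x\<in>A. \<forall>y\<in>A. f x = f y \<longleftrightarrow> g x = g y"
  shows "ecard (f ` A) = ecard (g ` A)"
proof -
  define h where "h = (\<lambda>z. f (inv_into A g z))"
  have h_g: "h (g x) = f x" if "x \<in> A" for x
    using assms that inv_into_into[of "g x" g A] f_inv_into_f[of "g x" g A]
    unfolding h_def by blast
  have "bij_betw h (g ` A) (f ` A)"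
    unfolding bij_betw_def inj_on_def using h_g assms by (auto simp: image_image)
  then show ?thesis
    unfolding ecard_def using bij_betw_finite bij_betw_same_card by metis
qed

lemma ecard_Sigma:
  assumes "\<forall>j\<in>J. B j \<noteq> {}"
  shows "ecard (Sigma J B) = esum J (\<lambda>j. ecard (B j))"
proof (cases "finite J")
  case False
  have "fst ` Sigma J B = J" using assms by force
  then have "infinite (Sigma J B)" using False by (metis finite_imageI)
  then show ?thesis using False unfolding ecard_def esum_def by simp
next
  case fin: True
  show ?thesis
  proof (cases "\<forall>j\<in>J. finite (B j)")
    case True
    then show ?thesis
      using fin unfolding ecard_def esum_def by (simp add: card_SigmaI flip: of_nat_eq_enat)
  next
    case False
    then obtain j where j: "j \<in> J" "infinite (B j)" by blast
    have "snd ` ({j} \<times> B j) = B j" "{j} \<times> B j \<subseteq> Sigma J B" using j(1) by force+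
    then have "infinite (Sigma J B)" using j(2) by (metis finite_imageI finite_subset)
    moreover have "(\<Sum>j\<in>J. ecard (B j)) = \<infinity>"
      using sum.remove[OF fin j(1), of "\<lambda>j. ecard (B j)"] j(2) unfolding ecard_def by simp
    ultimately show ?thesis using fin unfolding ecard_def esum_def by simp
  qed
qed

locale triangular_product_endo = H: group H + K: group K
  for H :: "('h, 'm) monoid_scheme" and K :: "('k, 'n) monoid_scheme" +
  fixes alpha :: "'h \<Rightarrow> 'h" and beta :: "'k \<Rightarrow> 'h" and delta :: "'k \<Rightarrow> 'k"
  assumes alpha_hom: "alpha \<in> hom H H" and beta_hom: "beta \<in> hom K H"
    and delta_hom: "delta \<in> hom K K"
    and alpha_beta_commute: "\<forall>h \<in> carrier H. \<forall>k \<in> carrier K.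
           alpha h \<otimes>\<^bsub>H\<^esub> beta k = beta k \<otimes>\<^bsub>H\<^esub> alpha h"
begin

sublocale A: group_hom H H alpha
  by (simp add: group_hom_def group_hom_axioms_def alpha_hom H.group_axioms)
sublocale B: group_hom K H beta
  by (simp add: group_hom_def group_hom_axioms_def beta_hom H.group_axioms K.group_axioms)
sublocale D: group_hom K K delta
  by (simp add: group_hom_def group_hom_axioms_def delta_hom K.group_axioms)

definition twisted_orbit :: "'k set \<Rightarrow> 'h \<Rightarrow> 'h set set" where
  "twisted_orbit S a = (\<lambda>y. twisted_class H alpha (a \<otimes>\<^bsub>H\<^esub> beta y)) ` S"

lemma action_orbits_eq: "action_orbits H alpha beta S = twisted_orbit S ` carrier H"
  unfolding action_orbits_def twisted_orbit_def ..

lemma twisted_conj_mult_beta: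
  assumes "x \<in> carrier H" "x' \<in> carrier H" "y \<in> carrier K" "twisted_conj H alpha x x'"
  shows "twisted_conj H alpha (x \<otimes>\<^bsub>H\<^esub> beta y) (x' \<otimes>\<^bsub>H\<^esub> beta y)"
proof -
  obtain g where g: "g \<in> carrier H" "x = g \<otimes>\<^bsub>H\<^esub> x' \<otimes>\<^bsub>H\<^esub> inv\<^bsub>H\<^esub> (alpha g)"
    using assms(4) unfolding twisted_conj_def by blast
  have "inv\<^bsub>H\<^esub> (alpha g) \<otimes>\<^bsub>H\<^esub> beta y = beta y \<otimes>\<^bsub>H\<^esub> inv\<^bsub>H\<^esub> (alpha g)"
    using alpha_beta_commute g(1) assms(3) by (metis A.hom_inv H.inv_closed)
  then have "x \<otimes>\<^bsub>H\<^esub> beta y = g \<otimes>\<^bsub>H\<^esub> (x' \<otimes>\<^bsub>H\<^esub> beta y) \<otimes>\<^bsub>H\<^esub> inv\<^bsub>H\<^esub> (alpha g)"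
    using g assms(2,3) by (simp add: H.m_assoc)
  then show ?thesis unfolding twisted_conj_def using g(1) by blast
qed

lemma twisted_orbit_cong:
  assumes "S \<subseteq> carrier K" "a \<in> carrier H" "a' \<in> carrier H" "twisted_conj H alpha a a'"
  shows "twisted_orbit S a = twisted_orbit S a'"
  unfolding twisted_orbit_def
proof (rule image_cong[OF refl])
  fix y assume "y \<in> S"
  then have "y \<in> carrier K" using assms(1) by blast
  then show "twisted_class H alpha (a \<otimes>\<^bsub>H\<^esub> beta y) = twisted_class H alpha (a' \<otimes>\<^bsub>H\<^esub> beta y)"
    using twisted_class_eq_iff[OF A.group_hom_axioms] twisted_conj_mult_beta assms(2-4) by simp
qed

lemma twisted_orbit_translate:
  assumes S: "subgroup S K" and b: "b \<in> carrier H" and y0: "y0 \<in> S"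
  shows "twisted_orbit S (b \<otimes>\<^bsub>H\<^esub> beta y0) = twisted_orbit S b"
proof -
  interpret S: subgroup S K by fact
  have "(\<lambda>y. y0 \<otimes>\<^bsub>K\<^esub> y) ` S = S"
  proof (intro equalityI subsetI)
    fix y assume "y \<in> S"
    then have "y = y0 \<otimes>\<^bsub>K\<^esub> (inv\<^bsub>K\<^esub> y0 \<otimes>\<^bsub>K\<^esub> y)" "inv\<^bsub>K\<^esub> y0 \<otimes>\<^bsub>K\<^esub> y \<in> S"
      using y0 by (simp_all add: K.m_assoc flip: K.m_assoc[of y0 "inv\<^bsub>K\<^esub> y0"])
    then show "y \<in> (\<lambda>y. y0 \<otimes>\<^bsub>K\<^esub> y) ` S" by blast
  qed (use y0 in auto)
  moreover have "twisted_orbit S (b \<otimes>\<^bsub>H\<^esub> beta y0)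
      = (\<lambda>z. twisted_class H alpha (b \<otimes>\<^bsub>H\<^esub> beta z)) ` (\<lambda>y. y0 \<otimes>\<^bsub>K\<^esub> y) ` S"
    unfolding twisted_orbit_def image_image using b y0 by (intro image_cong) (simp_all add: H.m_assoc)
  ultimately show ?thesis unfolding twisted_orbit_def by simp
qed

lemma twisted_orbit_eq_iff:
  assumes S: "subgroup S K" and a: "a \<in> carrier H" and b: "b \<in> carrier H"
  shows "twisted_orbit S a = twisted_orbit S b
    \<longleftrightarrow> (\<exists>y\<in>S. twisted_conj H alpha a (b \<otimes>\<^bsub>H\<^esub> beta y))"
proof
  assume orbit_eq: "twisted_orbit S a = twisted_orbit S b"
  have "twisted_class H alpha a \<in> twisted_orbit S a"
    unfolding twisted_orbit_def using subgroup.one_closed[OF S] a by force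
  then have "twisted_class H alpha a \<in> twisted_orbit S b" by (simp only: orbit_eq)
  then obtain y where "y \<in> S" "twisted_class H alpha a = twisted_class H alpha (b \<otimes>\<^bsub>H\<^esub> beta y)"
    unfolding twisted_orbit_def by blast
  moreover have "y \<in> carrier K" using \<open>y \<in> S\<close> subgroup.subset[OF S] by blast
  ultimately show "\<exists>y\<in>S. twisted_conj H alpha a (b \<otimes>\<^bsub>H\<^esub> beta y)"
    using twisted_class_eq_iff[OF A.group_hom_axioms] a b by auto
next
  assume "\<exists>y\<in>S. twisted_conj H alpha a (b \<otimes>\<^bsub>H\<^esub> beta y)"
  then obtain y where y: "y \<in> S" "twisted_conj H alpha a (b \<otimes>\<^bsub>H\<^esub> beta y)" by blast
  have "y \<in> carrier K" using y(1) subgroup.subset[OF S] by blast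
  then have "twisted_orbit S a = twisted_orbit S (b \<otimes>\<^bsub>H\<^esub> beta y)"
    using twisted_orbit_cong[OF subgroup.subset[OF S] a _ y(2)] b by simp
  also have "\<dots> = twisted_orbit S b" by (rule twisted_orbit_translate[OF S b y(1)])
  finally show "twisted_orbit S a = twisted_orbit S b" .
qed

abbreviation G where "G \<equiv> H \<times>\<times> K"

definition phi :: "'h \<times> 'k \<Rightarrow> 'h \<times> 'k" where
  "phi = (\<lambda>(h, k). (alpha h \<otimes>\<^bsub>H\<^esub> beta k, delta k))"

lemma phi_hom: "phi \<in> hom G G"
proof (rule homI)
  fix x assume "x \<in> carrier G" then show "phi x \<in> carrier G"
    by (auto simp: phi_def)
next
  fix x y assume "x \<in> carrier G" "y \<in> carrier G"
  then obtain h1 k1 h2 k2 where x: "x = (h1, k1)" "h1 \<in> carrier H" "k1 \<in> carrier K"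
    and y: "y = (h2, k2)" "h2 \<in> carrier H" "k2 \<in> carrier K" by auto
  have "alpha h1 \<otimes>\<^bsub>H\<^esub> alpha h2 \<otimes>\<^bsub>H\<^esub> (beta k1 \<otimes>\<^bsub>H\<^esub> beta k2)
      = alpha h1 \<otimes>\<^bsub>H\<^esub> (alpha h2 \<otimes>\<^bsub>H\<^esub> beta k1) \<otimes>\<^bsub>H\<^esub> beta k2"
    using x y by (simp add: H.m_assoc)
  also have "\<dots> = alpha h1 \<otimes>\<^bsub>H\<^esub> beta k1 \<otimes>\<^bsub>H\<^esub> (alpha h2 \<otimes>\<^bsub>H\<^esub> beta k2)"
    using x y alpha_beta_commute[rule_format, of h2 k1] by (simp add: H.m_assoc)
  finally show "phi (x \<otimes>\<^bsub>G\<^esub> y) = phi x \<otimes>\<^bsub>G\<^esub> phi y"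
    using x y by (simp add: phi_def)
qed

lemma phi_group_hom: "group_hom G G phi"
  by (simp add: group_hom_def group_hom_axioms_def phi_hom DirProd_group
      H.group_axioms K.group_axioms)

lemma twisted_conj_phi_iff:
  "twisted_conj G phi (a, k) (b, k')
    \<longleftrightarrow> (\<exists>g\<in>carrier H. \<exists>y\<in>carrier K.
          a = g \<otimes>\<^bsub>H\<^esub> b \<otimes>\<^bsub>H\<^esub> inv\<^bsub>H\<^esub> (alpha g \<otimes>\<^bsub>H\<^esub> beta y)
          \<and> k = y \<otimes>\<^bsub>K\<^esub> k' \<otimes>\<^bsub>K\<^esub> inv\<^bsub>K\<^esub> (delta y))"
  unfolding twisted_conj_def by (simp add: phi_def H.group_axioms K.group_axioms)

lemma twisted_conj_phi_normal_form:
  assumes "h \<in> carrier H" "c \<in> carrier K" "k \<in> carrier K"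
  shows "twisted_conj G phi (h, c \<otimes>\<^bsub>K\<^esub> k \<otimes>\<^bsub>K\<^esub> inv\<^bsub>K\<^esub> (delta c)) (h \<otimes>\<^bsub>H\<^esub> beta c, k)"
  unfolding twisted_conj_phi_iff using assms
  by (intro bexI[of _ "\<one>\<^bsub>H\<^esub>"] bexI[of _ c]) (simp_all add: H.m_assoc)

lemma twisted_conj_phi_snd:
  "twisted_conj G phi (a, k) (b, k') \<Longrightarrow> twisted_conj K delta k k'"
  unfolding twisted_conj_def[of K] by (auto simp: twisted_conj_phi_iff)

lemma mult_inv_alpha_beta:
  assumes "g \<in> carrier H" "b \<in> carrier H" "y \<in> carrier K"
  shows "g \<otimes>\<^bsub>H\<^esub> b \<otimes>\<^bsub>H\<^esub> inv\<^bsub>H\<^esub> (alpha g \<otimes>\<^bsub>H\<^esub> beta y)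
    = g \<otimes>\<^bsub>H\<^esub> (b \<otimes>\<^bsub>H\<^esub> beta (inv\<^bsub>K\<^esub> y)) \<otimes>\<^bsub>H\<^esub> inv\<^bsub>H\<^esub> (alpha g)"
  using assms by (simp add: H.m_assoc H.inv_mult_group)

lemma twisted_conj_phi_same_fibre:
  assumes a: "a \<in> carrier H" and b: "b \<in> carrier H" and k: "k \<in> carrier K"
  shows "twisted_conj G phi (a, k) (b, k)
    \<longleftrightarrow> twisted_orbit (twisted_stab K delta k) a = twisted_orbit (twisted_stab K delta k) b"
proof -
  let ?S = "twisted_stab K delta k"
  have S: "subgroup ?S K" by (rule twisted_stab_subgroup[OF D.group_hom_axioms k])
  have "twisted_conj G phi (a, k) (b, k)
      \<longleftrightarrow> (\<exists>y\<in>?S. \<exists>g\<in>carrier H.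
            a = g \<otimes>\<^bsub>H\<^esub> (b \<otimes>\<^bsub>H\<^esub> beta (inv\<^bsub>K\<^esub> y)) \<otimes>\<^bsub>H\<^esub> inv\<^bsub>H\<^esub> (alpha g))"
    unfolding twisted_conj_phi_iff twisted_stab_def using mult_inv_alpha_beta b by auto
  also have "\<dots> \<longleftrightarrow> (\<exists>y\<in>?S. twisted_conj H alpha a (b \<otimes>\<^bsub>H\<^esub> beta (inv\<^bsub>K\<^esub> y)))"
    unfolding twisted_conj_def ..
  also have "\<dots> \<longleftrightarrow> (\<exists>y\<in>?S. twisted_conj H alpha a (b \<otimes>\<^bsub>H\<^esub> beta y))"
    using subgroup.m_inv_closed[OF S] subgroup.subset[OF S] by (metis K.inv_inv subsetD)
  also have "\<dots> \<longleftrightarrow> twisted_orbit ?S a = twisted_orbit ?S b"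
    by (rule twisted_orbit_eq_iff[OF S a b, symmetric])
  finally show ?thesis .
qed

lemma twisted_classes_phi_eq:
  fixes J :: "'j set" and kr :: "'j \<Rightarrow> 'k"
  assumes kr: "kr ` J \<subseteq> carrier K"
    and kr_cover: "\<forall>k \<in> carrier K. \<exists>j \<in> J. twisted_conj K delta k (kr j)"
  shows "twisted_classes G phi = (\<lambda>(j, a). twisted_class G phi (a, kr j)) ` (J \<times> carrier H)"
proof (intro equalityI subsetI)
  fix C assume "C \<in> twisted_classes G phi"
  then obtain h k where hk: "h \<in> carrier H" "k \<in> carrier K" "C = twisted_class G phi (h, k)"
    unfolding twisted_classes_def by auto
  obtain j c where j: "j \<in> J" and c: "c \<in> carrier K"
    and k: "k = c \<otimes>\<^bsub>K\<^esub> kr j \<otimes>\<^bsub>K\<^esub> inv\<^bsub>K\<^esub> (delta c)"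
    using kr_cover hk(2) unfolding twisted_conj_def by blast
  have krj: "kr j \<in> carrier K" using kr j by blast
  have "twisted_conj G phi (h, k) (h \<otimes>\<^bsub>H\<^esub> beta c, kr j)"
    unfolding k using twisted_conj_phi_normal_form hk(1) c krj .
  then have "C = twisted_class G phi (h \<otimes>\<^bsub>H\<^esub> beta c, kr j)"
    using twisted_class_eq_iff[OF phi_group_hom, of "(h, k)" "(h \<otimes>\<^bsub>H\<^esub> beta c, kr j)"]
      hk c krj by simp
  moreover have "(j, h \<otimes>\<^bsub>H\<^esub> beta c) \<in> J \<times> carrier H" using j hk(1) c by simp
  ultimately show "C \<in> (\<lambda>(j, a). twisted_class G phi (a, kr j)) ` (J \<times> carrier H)"
    by (auto intro: image_eqI)
qed (use kr in \<open>auto simp: twisted_classes_def\<close>)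

lemma twisted_class_phi_eq_iff:
  fixes J :: "'j set" and kr :: "'j \<Rightarrow> 'k"
  assumes kr: "kr ` J \<subseteq> carrier K"
    and kr_distinct: "\<forall>i \<in> J. \<forall>j \<in> J. twisted_conj K delta (kr i) (kr j) \<longrightarrow> i = j"
    and ij: "i \<in> J" "j \<in> J" and ab: "a \<in> carrier H" "b \<in> carrier H"
  shows "twisted_class G phi (a, kr i) = twisted_class G phi (b, kr j)
    \<longleftrightarrow> i = j \<and> twisted_orbit (twisted_stab K delta (kr j)) a
                = twisted_orbit (twisted_stab K delta (kr j)) b"
proof -
  have "kr i \<in> carrier K" "kr j \<in> carrier K" using kr ij by blast+
  then have "twisted_class G phi (a, kr i) = twisted_class G phi (b, kr j)
      \<longleftrightarrow> twisted_conj G phi (a, kr i) (b, kr j)"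
    using twisted_class_eq_iff[OF phi_group_hom, of "(a, kr i)" "(b, kr j)"] ab by simp
  also have "\<dots> \<longleftrightarrow> i = j \<and> twisted_orbit (twisted_stab K delta (kr j)) a
                          = twisted_orbit (twisted_stab K delta (kr j)) b"
    using twisted_conj_phi_snd kr_distinct twisted_conj_phi_same_fibre ij ab kr by blast
  finally show ?thesis .
qed

lemma reidemeister_phi:
  fixes J :: "'j set" and kr :: "'j \<Rightarrow> 'k"
  assumes kr: "kr ` J \<subseteq> carrier K"
    and kr_cover: "\<forall>k \<in> carrier K. \<exists>j \<in> J. twisted_conj K delta k (kr j)"
    and kr_distinct: "\<forall>i \<in> J. \<forall>j \<in> J. twisted_conj K delta (kr i) (kr j) \<longrightarrow> i = j"
  shows "reidemeister G phi
    = esum J (\<lambda>j. ecard (action_orbits H alpha beta (twisted_stab K delta (kr j))))"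
proof -
  let ?orbit = "\<lambda>j. twisted_orbit (twisted_stab K delta (kr j))"
  let ?cls = "\<lambda>(j, a). twisted_class G phi (a, kr j)"
  let ?lbl = "\<lambda>(j, a). (j, ?orbit j a)"
  have same_fibres: "?cls x = ?cls y \<longleftrightarrow> ?lbl x = ?lbl y"
    if xy: "x \<in> J \<times> carrier H" "y \<in> J \<times> carrier H" for x y
  proof -
    obtain i a j b where "x = (i, a)" "y = (j, b)" "i \<in> J" "j \<in> J" "a \<in> carrier H" "b \<in> carrier H"
      using xy by auto
    then show ?thesis
      using twisted_class_phi_eq_iff[OF kr kr_distinct, of i j a b] by (simp only: prod.case) auto
  qed
  have labels: "?lbl ` (J \<times> carrier H) = (SIGMA j:J. ?orbit j ` carrier H)" by auto
  have "reidemeister G phi = ecard (?cls ` (J \<times> carrier H))"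
    unfolding reidemeister_def twisted_classes_phi_eq[OF kr kr_cover] ..
  also have "\<dots> = ecard (SIGMA j:J. ?orbit j ` carrier H)"
    unfolding labels[symmetric] by (intro ecard_image_eq_if_same_fibres ballI same_fibres)
  also have "\<dots> = esum J (\<lambda>j. ecard (?orbit j ` carrier H))"
    by (rule ecard_Sigma) auto
  finally show ?thesis unfolding action_orbits_eq .
qed

end

theorem mainTheorem9:
  fixes H :: "('h, 'm) monoid_scheme" and K :: "('k, 'n) monoid_scheme"
    and alpha :: "'h \<Rightarrow> 'h" and beta :: "'k \<Rightarrow> 'h" and delta :: "'k \<Rightarrow> 'k"
    and J :: "'j set" and kr :: "'j \<Rightarrow> 'k"
  assumes "group H" and "group K"
    and "alpha \<in> hom H H" and "beta \<in> hom K H" and "delta \<in> hom K K"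
    and "\<forall>h \<in> carrier H. \<forall>k \<in> carrier K.
           alpha h \<otimes>\<^bsub>H\<^esub> beta k = beta k \<otimes>\<^bsub>H\<^esub> alpha h"
    and "kr ` J \<subseteq> carrier K"
    and "\<forall>k \<in> carrier K. \<exists>j \<in> J. twisted_conj K delta k (kr j)"
    and "\<forall>i \<in> J. \<forall>j \<in> J. twisted_conj K delta (kr i) (kr j) \<longrightarrow> i = j"
  shows "reidemeister (H \<times>\<times> K) (\<lambda>(h, k). (alpha h \<otimes>\<^bsub>H\<^esub> beta k, delta k))
         = esum J (\<lambda>j. ecard (action_orbits H alpha beta (twisted_stab K delta (kr j))))"
proof -
  interpret triangular_product_endo H K alpha beta delta
    using assms(1-6) by (simp add: triangular_product_endo_def triangular_product_endo_axioms_def)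
  show ?thesis using reidemeister_phi[OF assms(7-9)] unfolding phi_def .
qed

end
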